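(* Fix a test example $z'$ and $\lambda>0$. Assume $F_S\,\nabla_\theta f(z',\theta_S^* )\neq0$ and $\mathrm{Var}_{A\sim D_a}[f(z',\theta_A^* )]>0$. Then $\dot c_p(\lambda;z')>0$ if and only if $$r_{z',\lambda}\, t_{3,z',\lambda}>\Big(-\nabla_\theta f(z',\theta_S^* )^\top(F_S+\lambda I_p)^{-2}g_{z'}\Big)\, t_{2,z',\lambda}.$$
   Context: Let $n\ge 2$ and let $S=\{z_1,\dots,z_n\}$ be a training set. For parameters $\theta\in\mathbb{R}^p$, let $L(z,\theta)>0$ be a loss that is differentiable in $\theta$. Set $p(z,\theta):=e^{-L(z,\theta)}\in(0,1)$ and $f(z,\theta):=\ln\frac{p(z,\theta)}{1-p(z,\theta)}$. Let $\theta_S^*$ satisfy $\sum_{i=1}^n\nabla_\theta L(z_i,\theta_S^* )=0$. For every subset $A\subseteq S$, let $\theta_A^*\in\mathbb{R}^p$ be a fixed parameter vector. Fix $1\le a<n$, and let $D_a$ be the uniform distribution over the size-$a$ subsets of $S$. Let $J\in\mathbb{R}^{n\times p}$ have $i$-th row $\nabla_\theta L(z_i,\theta_S^* )^\top$, and let $F_S:=\frac1nJ^\top J$. For $\lambda>0$ define $\tau_\lambda(z',z):=-\nabla_\theta f(z',\theta_S^* )^\top(F_S+\lambda I_p)^{-1}\nabla_\theta L(z,\theta_S^* )$. Let $c_p(\lambda;z')$ be the Pearson correlation, under $A\sim D_a$, between $f(z',\theta_A^* )$ and $\sum_{z\in A}\tau_\lambda(z',z)$, and let $\dot c_p(\lambda;z'):=\partial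 c_p(\lambda;z')/\partial\lambda$. Define: - $\alpha_{z',i}:=\mathbb{E}_{A\sim D_a}[f(z',\theta_A^* )\mid z_i\in A]-\mathbb{E}_{A\sim D_a}[f(z',\theta_A^* )]$; - $g_{z'}:=\frac1n\sum_i\alpha_{z',i}\nabla_\theta L(z_i,\theta_S^* )$; - $t_{k,z',\lambda}:=\nabla_\theta f(z',\theta_S^* )^\top(F_S+\lambda I_p)^{-k}F_S\nabla_\theta f(z',\theta_S^* )$; - $r_{z',\lambda}:=-\nabla_\theta f(z',\theta_S^* )^\top(F_S+\lambda I_p)^{-1}g_{z'}$. *)

theory Defs
  imports "HOL-Analysis.Analysis"
begin

definition grad :: "(real^'p \<Rightarrow> real) \<Rightarrow> real^'p \<Rightarrow> real^'p" where
  "grad F x = (THE D. GDERIV F x :> D)"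

definition logit_f :: "('z \<Rightarrow> real^'p \<Rightarrow> real) \<Rightarrow> 'z \<Rightarrow> real^'p \<Rightarrow> real" where
  "logit_f L z \<theta> = (let q = exp (- L z \<theta>) in ln (q / (1 - q)))"

text \<open>Support of D_a: the size-a subsets of S.\<close>
definition size_subsets :: "'z set \<Rightarrow> nat \<Rightarrow> 'z set set" where
  "size_subsets S a = {A. A \<subseteq> S \<and> card A = a}"

definition unif_exp :: "'z set set \<Rightarrow> ('z set \<Rightarrow> real) \<Rightarrow> real" where
  "unif_exp D X = (\<Sum>A\<in>D. X A) / real (card D)"

definition unif_var :: "'z set set \<Rightarrow> ('z set \<Rightarrow> real) \<Rightarrow> real" where
  "unif_var D X = unif_exp D (\<lambda>A. (X A - unif_exp D X)\<^sup>2)"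

definition unif_cov :: "'z set set \<Rightarrow> ('z set \<Rightarrow> real) \<Rightarrow> ('z set \<Rightarrow> real) \<Rightarrow> real" where
  "unif_cov D X Y = unif_exp D (\<lambda>A. (X A - unif_exp D X) * (Y A - unif_exp D Y))"

definition pearson :: "'z set set \<Rightarrow> ('z set \<Rightarrow> real) \<Rightarrow> ('z set \<Rightarrow> real) \<Rightarrow> real" where
  "pearson D X Y = unif_cov D X Y / (sqrt (unif_var D X) * sqrt (unif_var D Y))"

definition outer :: "real^'p \<Rightarrow> real^'p \<Rightarrow> real^'p^'p" where
  "outer u v = (\<chi> i j. u $ i * v $ j)"

text \<open>F_S = (1/n) J^T J, J having rows grad L(z_i, thetaS)^T, i = 0..n-1.\<close>
definition fisher :: "('z \<Rightarrow> real^'p \<Rightarrow> real) \<Rightarrow> (nat \<Rightarrow> 'z) \<Rightarrow> nat \<Rightarrow> real^'p \<Rightarrow> real^'p^'p" where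
  "fisher L z n \<theta>S = (1 / real n) *\<^sub>R (\<Sum>i<n. outer (grad (L (z i)) \<theta>S) (grad (L (z i)) \<theta>S))"

fun mpow :: "real^'p^'p \<Rightarrow> nat \<Rightarrow> real^'p^'p" where
  "mpow M 0 = mat 1"
| "mpow M (Suc k) = M ** mpow M k"

definition reg_inv :: "('z \<Rightarrow> real^'p \<Rightarrow> real) \<Rightarrow> (nat \<Rightarrow> 'z) \<Rightarrow> nat \<Rightarrow> real^'p \<Rightarrow> real \<Rightarrow> real^'p^'p" where
  "reg_inv L z n \<theta>S lam = matrix_inv (fisher L z n \<theta>S + lam *\<^sub>R mat 1)"

definition tau :: "('z \<Rightarrow> real^'p \<Rightarrow> real) \<Rightarrow> (nat \<Rightarrow> 'z) \<Rightarrow> nat \<Rightarrow> real^'p \<Rightarrow> real \<Rightarrow> 'z \<Rightarrow> 'z \<Rightarrow> real" where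
  "tau L z n \<theta>S lam z' \<zeta> =
     - (grad (logit_f L z') \<theta>S \<bullet> (reg_inv L z n \<theta>S lam *v grad (L \<zeta>) \<theta>S))"

definition c_p :: "('z \<Rightarrow> real^'p \<Rightarrow> real) \<Rightarrow> (nat \<Rightarrow> 'z) \<Rightarrow> nat \<Rightarrow> nat \<Rightarrow> real^'p
    \<Rightarrow> ('z set \<Rightarrow> real^'p) \<Rightarrow> 'z \<Rightarrow> real \<Rightarrow> real" where
  "c_p L z n a \<theta>S \<theta>A z' lam =
     pearson (size_subsets (z ` {..<n}) a) (\<lambda>A. logit_f L z' (\<theta>A A))
       (\<lambda>A. \<Sum>\<zeta>\<in>A. tau L z n \<theta>S lam z' \<zeta>)"

definition alpha :: "('z \<Rightarrow> real^'p \<Rightarrow> real) \<Rightarrow> (nat \<Rightarrow> 'z) \<Rightarrow> nat \<Rightarrow> nat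
    \<Rightarrow> ('z set \<Rightarrow> real^'p) \<Rightarrow> 'z \<Rightarrow> nat \<Rightarrow> real" where
  "alpha L z n a \<theta>A z' i =
     unif_exp {A \<in> size_subsets (z ` {..<n}) a. z i \<in> A} (\<lambda>A. logit_f L z' (\<theta>A A))
     - unif_exp (size_subsets (z ` {..<n}) a) (\<lambda>A. logit_f L z' (\<theta>A A))"

definition g_vec :: "('z \<Rightarrow> real^'p \<Rightarrow> real) \<Rightarrow> (nat \<Rightarrow> 'z) \<Rightarrow> nat \<Rightarrow> nat \<Rightarrow> real^'p
    \<Rightarrow> ('z set \<Rightarrow> real^'p) \<Rightarrow> 'z \<Rightarrow> real^'p" where
  "g_vec L z n a \<theta>S \<theta>A z' =
     (1 / real n) *\<^sub>R (\<Sum>i<n. alpha L z n a \<theta>A z' i *\<^sub>R grad (L (z i)) \<theta>S)"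

definition t_val :: "nat \<Rightarrow> ('z \<Rightarrow> real^'p \<Rightarrow> real) \<Rightarrow> (nat \<Rightarrow> 'z) \<Rightarrow> nat \<Rightarrow> real^'p
    \<Rightarrow> 'z \<Rightarrow> real \<Rightarrow> real" where
  "t_val k L z n \<theta>S z' lam =
     grad (logit_f L z') \<theta>S \<bullet>
       ((mpow (reg_inv L z n \<theta>S lam) k ** fisher L z n \<theta>S) *v grad (logit_f L z') \<theta>S)"

definition r_val :: "('z \<Rightarrow> real^'p \<Rightarrow> real) \<Rightarrow> (nat \<Rightarrow> 'z) \<Rightarrow> nat \<Rightarrow> nat \<Rightarrow> real^'p
    \<Rightarrow> ('z set \<Rightarrow> real^'p) \<Rightarrow> 'z \<Rightarrow> real \<Rightarrow> real" where
  "r_val L z n a \<theta>S \<theta>A z' lam =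
     - (grad (logit_f L z') \<theta>S \<bullet> (reg_inv L z n \<theta>S lam *v g_vec L z n a \<theta>S \<theta>A z'))"

end

theory Submission
  imports Defs
begin

text \<open>
  Write \<open>R \<lambda> = (F\<^sub>S + \<lambda> I)\<^sup>-\<^sup>1\<close> and \<open>v = \<nabla>f(z', \<theta>\<^sub>S)\<close>. Since the training
  gradients sum to zero, \<open>Y A = \<Sum>z\<in>A. \<tau>\<^sub>\<lambda>(z', z)\<close> is a centred additive statistic of a
  uniformly random \<open>a\<close>-subset, and the formulas for sampling without replacement give
  \<open>Cov(f, Y) = a r\<^sub>\<lambda>\<close> and \<open>Var Y = a (n - a) / (n - 1) t\<^sub>2\<close>. Hence
  \<open>c\<^sub>p \<lambda> = K r\<^sub>\<lambda> / sqrt t\<^sub>2\<close> with \<open>K > 0\<close> independent of \<open>\<lambda>\<close>.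
  The resolvent identity gives \<open>d R / d\<lambda> = - R\<^sup>2\<close>, so \<open>r' = v\<^sup>T R\<^sup>2 g\<close> and, since \<open>R\<close> is
  symmetric and commutes with \<open>F\<^sub>S\<close>, \<open>t\<^sub>2' = - 2 t\<^sub>3\<close>. The derivative of \<open>r / sqrt t\<^sub>2\<close> has
  the sign of \<open>2 r' t\<^sub>2 - r t\<^sub>2'\<close>, which is twice the difference of the two sides of the
  claimed inequality.
\<close>

section \<open>The resolvent of a positive semidefinite matrix\<close>

definition resolvent :: "real^'p^'p \<Rightarrow> real \<Rightarrow> real^'p^'p" where
  "resolvent F m = matrix_inv (F + m *\<^sub>R mat 1)"

lemma reg_inv_eq_resolvent: "reg_inv L z n \<theta> = resolvent (fisher L z n \<theta>)"
  by (simp add: fun_eq_iff reg_inv_def resolvent_def)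

lemma mpow_mult_vector:
  "mpow M 2 *v x = M *v (M *v x)"
  "(mpow M 2 ** B) *v x = M *v (M *v (B *v x))"
  "(mpow M 3 ** B) *v x = M *v (M *v (M *v (B *v x)))"
  by (simp_all add: numeral_2_eq_2 numeral_3_eq_3 matrix_vector_mul_assoc matrix_mul_assoc)

locale psd_symmetric =
  fixes F :: "real^'p^'p"
  assumes quadratic_nonneg: "\<And>x. 0 \<le> x \<bullet> (F *v x)"
    and symmetric: "\<And>x y. (F *v x) \<bullet> y = x \<bullet> (F *v y)"
begin

abbreviation R :: "real \<Rightarrow> real^'p^'p" where "R \<equiv> resolvent F"

lemma shift_mult_vector: "(F + m *\<^sub>R mat 1) *v x = F *v x + m *\<^sub>R x"
  by (simp add: matrix_vector_mult_add_rdistrib scaleR_matrix_vector_assoc[symmetric])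

text \<open>Nonnegativity of \<open>t \<mapsto> (x + t y) \<bullet> F (x + t y)\<close> forces \<open>y \<bullet> F x = 0\<close>; take \<open>y = F x\<close>.\<close>

lemma quadratic_zero_imp_zero:
  assumes "x \<bullet> (F *v x) = 0" shows "F *v x = 0"
proof -
  have "(F *v x) \<bullet> (F *v x) = 0"
  proof (rule ccontr)
    define y where "y = F *v x"
    define c where "c = y \<bullet> (F *v x)"
    define d where "d = y \<bullet> (F *v y)"
    assume "(F *v x) \<bullet> (F *v x) \<noteq> 0"
    then have "c \<noteq> 0" by (simp add: c_def y_def)
    have d0: "0 \<le> d" by (simp add: d_def quadratic_nonneg)
    have expand: "(x + t *\<^sub>R y) \<bullet> (F *v (x + t *\<^sub>R y)) = 2 * t * c + t\<^sup>2 * d" for t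
      using assms symmetric[of x y]
      by (simp add: c_def d_def matrix_vector_right_distrib matrix_vector_mult_scaleR
          inner_add_left inner_add_right inner_commute power2_eq_square algebra_simps)
    define t where "t = - c / (d + 1)"
    have "0 \<le> 2 * t * c + t\<^sup>2 * d" using quadratic_nonneg expand by metis
    also have "2 * t * c + t\<^sup>2 * d = - c\<^sup>2 * (d + 2) / (d + 1)\<^sup>2"
      using d0 unfolding t_def by (simp add: field_simps power2_eq_square add_nonneg_eq_0_iff)
    also have "\<dots> < 0" using \<open>c \<noteq> 0\<close> d0 by (simp add: divide_neg_pos mult_pos_pos)
    finally show False by simp
  qed
  then show ?thesis by simp
qed

lemma shift_invertible:
  assumes "m > 0"
  shows "(F + m *\<^sub>R mat 1) ** R m = mat 1" and "R m ** (F + m *\<^sub>R mat 1) = mat 1"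
proof -
  let ?A = "F + m *\<^sub>R mat 1"
  have "x = 0" if "?A *v x = 0" for x
  proof -
    have "x \<bullet> (F *v x) + m * (x \<bullet> x) = 0"
      using that by (metis inner_add_right inner_scaleR_right inner_zero_right shift_mult_vector)
    then have "m * (x \<bullet> x) \<le> 0" using quadratic_nonneg[of x] by linarith
    with assms have "x \<bullet> x \<le> 0" by (simp add: mult_le_0_iff)
    then show "x = 0" by (metis inner_gt_zero_iff not_le)
  qed
  then obtain B where B: "B ** ?A = mat 1" using matrix_left_invertible_ker by blast
  then have "\<exists>B. ?A ** B = mat 1 \<and> B ** ?A = mat 1" using matrix_left_right_inverse by blast
  then have "?A ** R m = mat 1 \<and> R m ** ?A = mat 1"
    unfolding resolvent_def matrix_inv_def by (rule someI_ex)
  then show "?A ** R m = mat 1" and "R m ** ?A = mat 1" by auto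
qed

lemma resolvent_solves: "m > 0 \<Longrightarrow> F *v (R m *v y) + m *\<^sub>R (R m *v y) = y"
  by (metis shift_invertible(1) shift_mult_vector matrix_vector_mul_assoc matrix_vector_mul_lid)

lemma resolvent_inverts: "m > 0 \<Longrightarrow> R m *v (F *v y + m *\<^sub>R y) = y"
  by (metis shift_invertible(2) shift_mult_vector matrix_vector_mul_assoc matrix_vector_mul_lid)

lemma resolvent_symmetric:
  assumes "m > 0" shows "x \<bullet> (R m *v y) = (R m *v x) \<bullet> y"
proof -
  let ?p = "R m *v x" and ?q = "R m *v y"
  have "x \<bullet> ?q = (F *v ?p + m *\<^sub>R ?p) \<bullet> ?q" using resolvent_solves[OF assms] by simp
  also have "\<dots> = ?p \<bullet> (F *v ?q + m *\<^sub>R ?q)" by (simp add: inner_add_left inner_add_right symmetric)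
  also have "\<dots> = ?p \<bullet> y" using resolvent_solves[OF assms] by simp
  finally show ?thesis .
qed

lemma resolvent_commute:
  assumes "m > 0" shows "R m *v (F *v y) = F *v (R m *v y)"
proof -
  have "R m *v (F *v y) = R m *v ((F *v y + m *\<^sub>R y) - m *\<^sub>R y)" by simp
  also have "\<dots> = y - m *\<^sub>R (R m *v y)"
    by (metis resolvent_inverts[OF assms] matrix_vector_mult_diff_distrib matrix_vector_mult_scaleR)
  also have "\<dots> = F *v (R m *v y)" using resolvent_solves[OF assms, of y] by (simp add: algebra_simps)
  finally show ?thesis .
qed

lemma norm_resolvent_le:
  assumes "m > 0" shows "norm (R m *v y) \<le> norm y / m"
proof -
  let ?x = "R m *v y"
  have "m * (norm ?x)\<^sup>2 \<le> ?x \<bullet> (F *v ?x) + m * (?x \<bullet> ?x)"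
    using quadratic_nonneg[of ?x] by (simp add: power2_norm_eq_inner)
  also have "\<dots> = ?x \<bullet> y" using resolvent_solves[OF assms, of y] by (metis inner_add_right inner_scaleR_right)
  also have "\<dots> \<le> norm ?x * norm y" by (rule norm_cauchy_schwarz)
  finally have "m * (norm ?x)\<^sup>2 \<le> norm ?x * norm y" .
  then have "m * norm ?x \<le> norm y"
    by (cases "norm ?x = 0") (auto simp: power2_eq_square)
  with assms show ?thesis by (simp add: field_simps mult.commute)
qed

lemma resolvent_identity:
  assumes "m > 0" "l > 0"
  shows "R m *v y - R l *v y = (l - m) *\<^sub>R (R m *v (R l *v y))"
proof -
  let ?w = "R l *v y"
  have "R m *v y - ?w = R m *v (y - (F *v ?w + m *\<^sub>R ?w))"
    using resolvent_inverts[OF assms(1), of ?w] by (metis matrix_vector_mult_diff_distrib)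
  also have "y - (F *v ?w + m *\<^sub>R ?w) = (l - m) *\<^sub>R ?w"
    using resolvent_solves[OF assms(2), of y] by (simp add: algebra_simps)
  finally show ?thesis by (simp add: matrix_vector_mult_scaleR)
qed

lemma resolvent_continuous:
  assumes l: "l > 0" shows "((\<lambda>m. R m *v w) \<longlongrightarrow> R l *v w) (at l)"
proof -
  define C where "C = 2 * norm (R l *v w) / l"
  have "\<forall>\<^sub>F m in at l. l / 2 < m"
    using l by (intro order_tendstoD(1)[OF tendsto_ident_at]) simp
  then have "\<forall>\<^sub>F m in at l. norm (R m *v w - R l *v w) \<le> \<bar>m - l\<bar> * C"
  proof (rule eventually_mono)
    fix m assume m: "l / 2 < m"
    then have "m > 0" using l by simp
    have "norm (R m *v w - R l *v w) = \<bar>m - l\<bar> * norm (R m *v (R l *v w))"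
      using resolvent_identity[OF \<open>m > 0\<close> l] by (simp add: abs_minus_commute)
    also have "\<dots> \<le> \<bar>m - l\<bar> * (norm (R l *v w) / m)"
      by (intro mult_left_mono norm_resolvent_le \<open>m > 0\<close>) simp
    also have "norm (R l *v w) / m \<le> C"
    proof -
      have "l * norm (R l *v w) \<le> (2 * m) * norm (R l *v w)"
        using m by (intro mult_right_mono) auto
      with l \<open>m > 0\<close> show ?thesis by (simp add: C_def field_simps)
    qed
    finally show "norm (R m *v w - R l *v w) \<le> \<bar>m - l\<bar> * C"
      by (simp add: mult_left_mono)
  qed
  moreover have "((\<lambda>m. \<bar>m - l\<bar> * C) \<longlongrightarrow> \<bar>l - l\<bar> * C) (at l)"
    by (intro tendsto_intros)
  ultimately have "((\<lambda>m. R m *v w - R l *v w) \<longlongrightarrow> 0) (at l)"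
    by (auto intro: Lim_null_comparison)
  then show ?thesis by (simp add: LIM_zero_iff)
qed

lemma resolvent_has_vector_derivative:
  assumes l: "l > 0"
  shows "((\<lambda>m. R m *v y) has_vector_derivative - (R l *v (R l *v y))) (at l)"
  unfolding has_vector_derivative_def has_derivative_iff_norm
proof
  let ?w = "R l *v y"
  show "bounded_linear (\<lambda>h. h *\<^sub>R - (R l *v ?w))" by (rule bounded_linear_scaleR_left)
  have "\<forall>\<^sub>F m in at l. 0 < m \<and> m \<noteq> l"
    using l by (intro eventually_conj order_tendstoD(1)[OF tendsto_ident_at] eventually_neq_at_within)
  then have "\<forall>\<^sub>F m in at l. norm (R m *v ?w - R l *v ?w)
      = norm (R m *v y - R l *v y - (m - l) *\<^sub>R - (R l *v ?w)) / norm (m - l)"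
  proof (rule eventually_mono)
    fix m assume m: "0 < m \<and> m \<noteq> l"
    have "R m *v y - R l *v y - (m - l) *\<^sub>R - (R l *v ?w) = (l - m) *\<^sub>R (R m *v ?w - R l *v ?w)"
      using resolvent_identity[of m l y] m l by (simp add: algebra_simps)
    with m show "norm (R m *v ?w - R l *v ?w)
      = norm (R m *v y - R l *v y - (m - l) *\<^sub>R - (R l *v ?w)) / norm (m - l)"
      by (simp add: abs_minus_commute)
  qed
  moreover have "((\<lambda>m. norm (R m *v ?w - R l *v ?w)) \<longlongrightarrow> 0) (at l)"
    using resolvent_continuous[OF l, of ?w] by (simp add: tendsto_norm_zero LIM_zero)
  ultimately show "((\<lambda>m. norm (R m *v y - R l *v y - (m - l) *\<^sub>R - (R l *v ?w)) / norm (m - l))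
      \<longlongrightarrow> 0) (at l)"
    by (rule Lim_transform_eventually[rotated])
qed

lemma has_real_derivative_inner_resolvent:
  assumes "l > 0"
  shows "((\<lambda>m. u \<bullet> (R m *v w)) has_real_derivative - (u \<bullet> (R l *v (R l *v w)))) (at l)"
  unfolding has_real_derivative_iff_has_vector_derivative
  using bounded_linear.has_vector_derivative[OF bounded_linear_inner_right
      resolvent_has_vector_derivative[OF assms]]
  by simp

lemma quadratic_resolvent_sq:
  assumes "m > 0"
  shows "u \<bullet> ((mpow (R m) 2 ** F) *v u) = (R m *v u) \<bullet> (R m *v (F *v u))"
  by (simp add: mpow_mult_vector resolvent_symmetric[OF assms])

lemma has_real_derivative_quadratic_resolvent_sq:
  assumes l: "l > 0"
  shows "((\<lambda>m. u \<bullet> ((mpow (R m) 2 ** F) *v u)) has_real_derivative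
      - 2 * (u \<bullet> ((mpow (R l) 3 ** F) *v u))) (at l)"
proof -
  let ?Ru = "R l *v u" and ?RFu = "R l *v (F *v u)"
  have "((\<lambda>m. (R m *v u) \<bullet> (R m *v (F *v u))) has_real_derivative
      ?Ru \<bullet> - (R l *v ?RFu) + - (R l *v ?Ru) \<bullet> ?RFu) (at l)"
    unfolding has_real_derivative_iff_has_vector_derivative
    by (intro bounded_bilinear.has_vector_derivative[OF bounded_bilinear_inner]
        resolvent_has_vector_derivative l)
  moreover have "?Ru \<bullet> - (R l *v ?RFu) + - (R l *v ?Ru) \<bullet> ?RFu = - 2 * (u \<bullet> ((mpow (R l) 3 ** F) *v u))"
    by (simp add: mpow_mult_vector resolvent_symmetric[OF l] vec.neg)
  moreover have "\<forall>\<^sub>F m in nhds l. u \<bullet> ((mpow (R m) 2 ** F) *v u) = (R m *v u) \<bullet> (R m *v (F *v u))"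
    using eventually_nhds_in_open[of "{0<..}" l] l
    by (auto elim!: eventually_mono simp: quadratic_resolvent_sq)
  ultimately show ?thesis
    by (auto intro: DERIV_cong_ev[THEN iffD2])
qed

lemma quadratic_resolvent_sq_pos:
  assumes m: "m > 0" and "F *v u \<noteq> 0"
  shows "0 < u \<bullet> ((mpow (R m) 2 ** F) *v u)"
proof -
  have eq: "u \<bullet> ((mpow (R m) 2 ** F) *v u) = (R m *v u) \<bullet> (F *v (R m *v u))"
    using quadratic_resolvent_sq[OF m] resolvent_commute[OF m] by simp
  have "(R m *v u) \<bullet> (F *v (R m *v u)) \<noteq> 0"
  proof
    assume "(R m *v u) \<bullet> (F *v (R m *v u)) = 0"
    then have "R m *v (F *v u) = 0"
      using quadratic_zero_imp_zero resolvent_commute[OF m] by simp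
    then have "F *v u = 0"
      using resolvent_solves[OF m, of "F *v u"] by simp
    with assms show False by simp
  qed
  with eq quadratic_nonneg show ?thesis by (metis order_less_le)
qed

end

section \<open>Additive statistics of a uniformly random subset\<close>

lemma finite_size_subsets: "finite S \<Longrightarrow> finite (size_subsets S a)"
  unfolding size_subsets_def by (rule finite_subset[of _ "Pow S"]) auto

lemma card_size_subsets_superset:
  assumes S: "finite S" and T: "T \<subseteq> S" and Ta: "card T \<le> a"
  shows "card {A \<in> size_subsets S a. T \<subseteq> A} = (card S - card T) choose (a - card T)"
proof -
  have fT: "finite T" using S T finite_subset by blast
  have "bij_betw (\<lambda>B. B \<union> T) {B. B \<subseteq> S - T \<and> card B = a - card T} {A \<in> size_subsets S a. T \<subseteq> A}"
  proof (rule bij_betw_byWitness[where f'="\<lambda>A. A - T"])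
    show "(\<lambda>B. B \<union> T) ` {B. B \<subseteq> S - T \<and> card B = a - card T} \<subseteq> {A \<in> size_subsets S a. T \<subseteq> A}"
    proof (rule image_subsetI)
      fix B assume B: "B \<in> {B. B \<subseteq> S - T \<and> card B = a - card T}"
      then have "finite B" using S finite_subset by blast
      with B fT have "card (B \<union> T) = card B + card T" by (intro card_Un_disjoint) auto
      with B T Ta show "B \<union> T \<in> {A \<in> size_subsets S a. T \<subseteq> A}" by (auto simp: size_subsets_def)
    qed
    show "(\<lambda>A. A - T) ` {A \<in> size_subsets S a. T \<subseteq> A} \<subseteq> {B. B \<subseteq> S - T \<and> card B = a - card T}"
      using card_Diff_subset[OF fT] by (auto simp: size_subsets_def)
  qed auto
  then have "card {A \<in> size_subsets S a. T \<subseteq> A} = card {B. B \<subseteq> S - T \<and> card B = a - card T}"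
    by (simp add: bij_betw_same_card)
  also have "\<dots> = card (S - T) choose (a - card T)" using S by (intro n_subsets) auto
  finally show ?thesis using card_Diff_subset[OF fT T] by simp
qed

lemma size_subsets_superset_empty:
  assumes "finite S" and "a < card T"
  shows "{A \<in> size_subsets S a. T \<subseteq> A} = {}"
proof -
  have "\<not> T \<subseteq> A" if "A \<in> size_subsets S a" for A
  proof
    assume "T \<subseteq> A"
    moreover have "finite A" using that assms(1) finite_subset unfolding size_subsets_def by blast
    ultimately have "card T \<le> card A" by (rule card_mono[rotated])
    with that assms(2) show False by (simp add: size_subsets_def)
  qed
  then show ?thesis by blast
qed

lemma sum_sum_member_swap:
  assumes "finite S" "finite E" "\<And>A. A \<in> E \<Longrightarrow> A \<subseteq> S"
  shows "(\<Sum>A\<in>E. \<Sum>\<zeta>\<in>A. f A \<zeta>) = (\<Sum>\<zeta>\<in>S. \<Sum>A\<in>{A\<in>E. \<zeta>\<in>A}. f A \<zeta>)"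
proof -
  have "(\<Sum>A\<in>E. \<Sum>\<zeta>\<in>A. f A \<zeta>) = (\<Sum>A\<in>E. \<Sum>\<zeta>\<in>{\<zeta>\<in>S. \<zeta> \<in> A}. f A \<zeta>)"
    using assms(3) by (intro sum.cong refl) auto
  also have "\<dots> = (\<Sum>\<zeta>\<in>S. \<Sum>A\<in>{A\<in>E. \<zeta>\<in>A}. f A \<zeta>)"
    by (rule sum.swap_restrict[OF assms(2,1)])
  finally show ?thesis .
qed

lemma choose_pred_ratio:
  fixes n a :: nat
  assumes "1 \<le> a" "a < n"
  shows "real ((n - 1) choose (a - 1)) / real (n choose a) = real a / real n"
proof -
  have "a * (n choose a) = n * ((n - 1) choose (a - 1))"
    using binomial_absorption[of "a - 1" n] assms by simp
  then have "real a * real (n choose a) = real n * real ((n - 1) choose (a - 1))"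
    by (metis of_nat_mult)
  moreover have "0 < n choose a" using assms by simp
  ultimately show ?thesis using assms by (simp add: divide_simps)
qed

lemma choose_pred2_ratio:
  fixes n a :: nat
  assumes "1 \<le> a" "a < n"
  shows "real ((n - 2) choose (a - 1)) / real (n choose a)
    = real a * (real n - real a) / (real n * (real n - 1))"
proof -
  have "(n - a) * ((n - 1) choose (a - 1)) = (n - 1) * ((n - 2) choose (a - 1))"
    using binomial_absorb_comp[of "n - 1" "a - 1"] assms by (simp add: numeral_2_eq_2)
  moreover have "a * (n choose a) = n * ((n - 1) choose (a - 1))"
    using binomial_absorption[of "a - 1" n] assms by simp
  ultimately have "n * (n - 1) * ((n - 2) choose (a - 1)) = a * (n - a) * (n choose a)"
    by (metis mult.assoc mult.left_commute)
  then have "real n * real (n - 1) * real ((n - 2) choose (a - 1)) = real a * real (n - a) * real (n choose a)"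
    by (metis of_nat_mult)
  moreover have "0 < n choose a" "2 \<le> n" using assms by auto
  ultimately show ?thesis using assms by (simp add: divide_simps of_nat_diff ac_simps)
qed

locale uniform_subsets =
  fixes S :: "'z set" and a :: nat
  assumes finite_S: "finite S" and a_pos: "1 \<le> a" and a_less: "a < card S"
begin

abbreviation D :: "'z set set" where "D \<equiv> size_subsets S a"

lemma finite_D: "finite D"
  by (rule finite_size_subsets[OF finite_S])

lemma subset_of_D: "A \<in> D \<Longrightarrow> A \<subseteq> S"
  by (simp add: size_subsets_def)

lemma card_D: "card D = card S choose a"
  using card_size_subsets_superset[OF finite_S, of "{}" a] by simp

lemma card_containing:
  assumes "\<zeta> \<in> S" shows "card {A \<in> D. \<zeta> \<in> A} = (card S - 1) choose (a - 1)"
  using card_size_subsets_superset[OF finite_S, of "{\<zeta>}" a] assms a_pos by simp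

lemma card_containing_pair:
  assumes "\<zeta> \<in> S" "\<eta> \<in> S" "\<zeta> \<noteq> \<eta>"
  shows "card {A \<in> D. \<zeta> \<in> A \<and> \<eta> \<in> A} + ((card S - 2) choose (a - 1)) = (card S - 1) choose (a - 1)"
proof -
  have card_pair: "card {\<zeta>, \<eta>} = 2" using assms(3) by simp
  show ?thesis
  proof (cases "2 \<le> a")
    case True
    then have "card {A \<in> D. \<zeta> \<in> A \<and> \<eta> \<in> A} = (card S - 2) choose (a - 2)"
      using card_size_subsets_superset[OF finite_S, of "{\<zeta>, \<eta>}" a] assms card_pair by simp
    moreover have "card S - 1 = Suc (card S - 2)" "a - 1 = Suc (a - 2)"
      using True a_less by auto
    ultimately show ?thesis by (simp only: binomial_Suc_Suc)
  next
    case False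
    then have "a = 1" using a_pos by simp
    then have "{A \<in> D. \<zeta> \<in> A \<and> \<eta> \<in> A} = {}"
      using size_subsets_superset_empty[OF finite_S, of a "{\<zeta>, \<eta>}"] card_pair by simp
    then have "card {A \<in> D. \<zeta> \<in> A \<and> \<eta> \<in> A} = 0" by (simp only: card.empty)
    with \<open>a = 1\<close> show ?thesis by simp
  qed
qed

lemma sum_additive:
  fixes b :: "'z \<Rightarrow> real"
  shows "(\<Sum>A\<in>D. \<Sum>\<zeta>\<in>A. b \<zeta>) = real ((card S - 1) choose (a - 1)) * (\<Sum>\<zeta>\<in>S. b \<zeta>)"
  by (simp add: sum_sum_member_swap[OF finite_S finite_D subset_of_D] card_containing sum_distrib_left)

lemma unif_exp_additive: "unif_exp D (\<lambda>A. \<Sum>\<zeta>\<in>A. b \<zeta>) = a / card S * (\<Sum>\<zeta>\<in>S. b \<zeta>)"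
proof -
  have "unif_exp D (\<lambda>A. \<Sum>\<zeta>\<in>A. b \<zeta>)
      = real ((card S - 1) choose (a - 1)) / real (card S choose a) * (\<Sum>\<zeta>\<in>S. b \<zeta>)"
    by (simp add: unif_exp_def sum_additive card_D)
  also have "real ((card S - 1) choose (a - 1)) / real (card S choose a) = a / card S"
    by (rule choose_pred_ratio[OF a_pos a_less])
  finally show ?thesis .
qed

lemma unif_cov_additive:
  "unif_cov D X (\<lambda>A. \<Sum>\<zeta>\<in>A. b \<zeta>) =
    a / card S * (\<Sum>\<zeta>\<in>S. b \<zeta> * (unif_exp {A \<in> D. \<zeta> \<in> A} X - unif_exp D X))"
proof -
  define E where "E = unif_exp D X"
  define EY where "EY = unif_exp D (\<lambda>A. \<Sum>\<zeta>\<in>A. b \<zeta>)"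
  define N1 where "N1 = real ((card S - 1) choose (a - 1))"
  have "card D > 0" using a_less by (simp add: card_D)
  then have centered: "(\<Sum>A\<in>D. X A - E) = 0"
    by (simp add: E_def unif_exp_def sum_subtractf)
  have conditional: "(\<Sum>A\<in>{A \<in> D. \<zeta> \<in> A}. X A - E) = N1 * (unif_exp {A \<in> D. \<zeta> \<in> A} X - E)"
    if "\<zeta> \<in> S" for \<zeta>
    using a_pos a_less
    by (simp add: unif_exp_def sum_subtractf card_containing[OF that] N1_def right_diff_distrib)
  have "unif_cov D X (\<lambda>A. \<Sum>\<zeta>\<in>A. b \<zeta>)
      = (\<Sum>A\<in>D. (X A - E) * ((\<Sum>\<zeta>\<in>A. b \<zeta>) - EY)) / real (card S choose a)"
    unfolding unif_cov_def E_def[symmetric] EY_def[symmetric]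
      unif_exp_def[where X = "\<lambda>A. (X A - E) * ((\<Sum>\<zeta>\<in>A. b \<zeta>) - EY)"] card_D ..
  also have "(\<Sum>A\<in>D. (X A - E) * ((\<Sum>\<zeta>\<in>A. b \<zeta>) - EY))
      = (\<Sum>A\<in>D. (X A - E) * (\<Sum>\<zeta>\<in>A. b \<zeta>)) - EY * (\<Sum>A\<in>D. X A - E)"
    by (simp add: right_diff_distrib sum_subtractf sum_distrib_left mult.commute)
  also have "\<dots> = (\<Sum>A\<in>D. \<Sum>\<zeta>\<in>A. (X A - E) * b \<zeta>)"
    by (simp add: centered sum_distrib_left)
  also have "\<dots> = (\<Sum>\<zeta>\<in>S. (\<Sum>A\<in>{A \<in> D. \<zeta> \<in> A}. X A - E) * b \<zeta>)"
    by (simp add: sum_sum_member_swap[OF finite_S finite_D subset_of_D] sum_distrib_right)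
  also have "\<dots> = (\<Sum>\<zeta>\<in>S. N1 * (b \<zeta> * (unif_exp {A \<in> D. \<zeta> \<in> A} X - E)))"
    by (rule sum.cong[OF refl]) (simp add: conditional)
  also have "\<dots> = N1 * (\<Sum>\<zeta>\<in>S. b \<zeta> * (unif_exp {A \<in> D. \<zeta> \<in> A} X - E))"
    by (simp add: sum_distrib_left)
  also have "\<dots> / real (card S choose a)
      = N1 / real (card S choose a) * (\<Sum>\<zeta>\<in>S. b \<zeta> * (unif_exp {A \<in> D. \<zeta> \<in> A} X - E))"
    by simp
  also have "N1 / real (card S choose a) = a / card S"
    unfolding N1_def by (rule choose_pred_ratio[OF a_pos a_less])
  finally show ?thesis by (simp add: E_def)
qed

lemma unif_var_additive:
  fixes b :: "'z \<Rightarrow> real"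
  assumes centered: "(\<Sum>\<zeta>\<in>S. b \<zeta>) = 0"
  shows "unif_var D (\<lambda>A. \<Sum>\<zeta>\<in>A. b \<zeta>)
    = real a * (real (card S) - real a) / (real (card S) * (real (card S) - 1)) * (\<Sum>\<zeta>\<in>S. (b \<zeta>)\<^sup>2)"
proof -
  define N1 where "N1 = real ((card S - 1) choose (a - 1))"
  define M where "M = real ((card S - 2) choose (a - 1))"
  have pair_count: "real (card {A \<in> {A \<in> D. \<zeta> \<in> A}. \<eta> \<in> A}) = N1 - M + (if \<zeta> = \<eta> then M else 0)"
    if "\<zeta> \<in> S" "\<eta> \<in> S" for \<zeta> \<eta>
  proof (cases "\<zeta> = \<eta>")
    case True
    then show ?thesis using card_containing[OF that(1)] by (simp add: N1_def)
  next
    case False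
    have "real (card {A \<in> D. \<zeta> \<in> A \<and> \<eta> \<in> A}) + M = N1"
      using card_containing_pair[OF that False] unfolding M_def N1_def by (metis of_nat_add)
    with False show ?thesis by simp
  qed
  have mean_zero: "unif_exp D (\<lambda>A. \<Sum>\<zeta>\<in>A. b \<zeta>) = 0"
    by (simp add: unif_exp_additive centered)
  have "unif_var D (\<lambda>A. \<Sum>\<zeta>\<in>A. b \<zeta>) = (\<Sum>A\<in>D. (\<Sum>\<zeta>\<in>A. b \<zeta>)\<^sup>2) / real (card S choose a)"
    unfolding unif_var_def mean_zero by (simp add: unif_exp_def card_D)
  also have "(\<Sum>A\<in>D. (\<Sum>\<zeta>\<in>A. b \<zeta>)\<^sup>2) = (\<Sum>A\<in>D. \<Sum>\<zeta>\<in>A. \<Sum>\<eta>\<in>A. b \<zeta> * b \<eta>)"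
    by (simp add: power2_eq_square sum_product)
  also have "\<dots> = (\<Sum>\<zeta>\<in>S. \<Sum>A\<in>{A \<in> D. \<zeta> \<in> A}. \<Sum>\<eta>\<in>A. b \<zeta> * b \<eta>)"
    by (rule sum_sum_member_swap[OF finite_S finite_D subset_of_D])
  also have "\<dots> = (\<Sum>\<zeta>\<in>S. \<Sum>\<eta>\<in>S. \<Sum>A\<in>{A \<in> {A \<in> D. \<zeta> \<in> A}. \<eta> \<in> A}. b \<zeta> * b \<eta>)"
    by (rule sum.cong[OF refl], rule sum_sum_member_swap[OF finite_S]) (auto simp: finite_D subset_of_D)
  also have "\<dots> = (\<Sum>\<zeta>\<in>S. \<Sum>\<eta>\<in>S. (N1 - M) * b \<zeta> * b \<eta> + (if \<zeta> = \<eta> then M * (b \<zeta>)\<^sup>2 else 0))"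
  proof (intro sum.cong refl)
    fix \<zeta> \<eta> assume "\<zeta> \<in> S" "\<eta> \<in> S"
    have "(\<Sum>A\<in>{A \<in> {A \<in> D. \<zeta> \<in> A}. \<eta> \<in> A}. b \<zeta> * b \<eta>)
        = real (card {A \<in> {A \<in> D. \<zeta> \<in> A}. \<eta> \<in> A}) * (b \<zeta> * b \<eta>)"
      by (rule sum_constant)
    also have "\<dots> = (N1 - M + (if \<zeta> = \<eta> then M else 0)) * (b \<zeta> * b \<eta>)"
      by (simp only: pair_count[OF \<open>\<zeta> \<in> S\<close> \<open>\<eta> \<in> S\<close>])
    finally show "(\<Sum>A\<in>{A \<in> {A \<in> D. \<zeta> \<in> A}. \<eta> \<in> A}. b \<zeta> * b \<eta>)
        = (N1 - M) * b \<zeta> * b \<eta> + (if \<zeta> = \<eta> then M * (b \<zeta>)\<^sup>2 else 0)"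
      by (cases "\<zeta> = \<eta>") (simp_all add: algebra_simps power2_eq_square)
  qed
  also have "\<dots> = (\<Sum>\<zeta>\<in>S. M * (b \<zeta>)\<^sup>2)"
  proof (rule sum.cong[OF refl])
    fix \<zeta> assume "\<zeta> \<in> S"
    then have "(\<Sum>\<eta>\<in>S. (N1 - M) * b \<zeta> * b \<eta> + (if \<zeta> = \<eta> then M * (b \<zeta>)\<^sup>2 else 0))
        = (N1 - M) * b \<zeta> * (\<Sum>\<eta>\<in>S. b \<eta>) + M * (b \<zeta>)\<^sup>2"
      by (simp add: sum.distrib sum_distrib_left finite_S)
    then show "(\<Sum>\<eta>\<in>S. (N1 - M) * b \<zeta> * b \<eta> + (if \<zeta> = \<eta> then M * (b \<zeta>)\<^sup>2 else 0))
        = M * (b \<zeta>)\<^sup>2"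
      by (simp add: centered)
  qed
  also have "\<dots> = M * (\<Sum>\<zeta>\<in>S. (b \<zeta>)\<^sup>2)"
    by (simp add: sum_distrib_left)
  also have "\<dots> / real (card S choose a) = M / real (card S choose a) * (\<Sum>\<zeta>\<in>S. (b \<zeta>)\<^sup>2)"
    by simp
  also have "M / real (card S choose a) = real a * (real (card S) - real a) / (real (card S) * (real (card S) - 1))"
    unfolding M_def by (rule choose_pred2_ratio[OF a_pos a_less])
  finally show ?thesis .
qed

end

lemma outer_mult_vector: "outer u v *v x = (v \<bullet> x) *\<^sub>R u"
  by (simp add: vec_eq_iff matrix_vector_mult_def outer_def inner_vec_def sum_distrib_left ac_simps)

lemma sum_matrix_mult_vector: "(\<Sum>i\<in>I. M i) *v x = (\<Sum>i\<in>I. M i *v x)"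
  unfolding vec_eq_iff matrix_vector_mult_def sum_component
  by (simp add: sum_distrib_right sum.swap[of _ UNIV])

lemma fisher_mult_vector:
  "fisher L z n \<theta> *v x = (1 / real n) *\<^sub>R (\<Sum>i<n. (grad (L (z i)) \<theta> \<bullet> x) *\<^sub>R grad (L (z i)) \<theta>)"
  unfolding fisher_def scaleR_matrix_vector_assoc[symmetric] sum_matrix_mult_vector outer_mult_vector ..

lemma inner_fisher:
  "y \<bullet> (fisher L z n \<theta> *v x) = (\<Sum>i<n. (grad (L (z i)) \<theta> \<bullet> y) * (grad (L (z i)) \<theta> \<bullet> x)) / real n"
  unfolding fisher_mult_vector by (simp add: inner_sum_right inner_commute ac_simps)

lemma psd_symmetric_fisher: "psd_symmetric (fisher L z n \<theta>)"
proof
  show "0 \<le> x \<bullet> (fisher L z n \<theta> *v x)" for x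
    unfolding inner_fisher by (simp add: sum_nonneg)
  show "(fisher L z n \<theta> *v x) \<bullet> y = x \<bullet> (fisher L z n \<theta> *v y)" for x y
    by (simp add: inner_commute[of _ y] inner_fisher mult.commute)
qed

section \<open>The correlation as a function of the damping\<close>

lemma deriv_ratio_sqrt_pos_iff:
  fixes r T c :: "real \<Rightarrow> real"
  assumes K: "K > 0" and T: "T l > 0"
    and r': "(r has_real_derivative r') (at l)" and T': "(T has_real_derivative T') (at l)"
    and c: "\<forall>\<^sub>F \<mu> in nhds l. c \<mu> = K * r \<mu> / sqrt (T \<mu>)"
  shows "deriv c l > 0 \<longleftrightarrow> r l * T' < 2 * r' * T l"
proof -
  define q where "q = sqrt (T l)"
  have q: "q > 0" "T l = q * q" using T by (simp_all add: q_def)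
  have "((\<lambda>\<mu>. K * r \<mu> / sqrt (T \<mu>)) has_real_derivative
      (K * r' * q - K * r l * (inverse q / 2 * T')) / (q * q)) (at l)"
    unfolding q_def
    by (intro DERIV_divide DERIV_cmult r' DERIV_chain2[OF DERIV_real_sqrt T'] T) (use T in simp)
  then have "(c has_real_derivative (K * r' * q - K * r l * (inverse q / 2 * T')) / (q * q)) (at l)"
    using c by (subst DERIV_cong_ev[OF refl c refl])
  then have "deriv c l = K / (2 * q * q * q) * (2 * r' * T l - r l * T')"
    using q by (simp add: DERIV_imp_deriv field_simps)
  moreover have "K / (2 * q * q * q) > 0" using K q by simp
  ultimately show ?thesis by (metis diff_gt_0_iff_gt zero_less_mult_iff order_less_asym)
qed

locale training_setup =
  fixes L :: "'z \<Rightarrow> real^'p \<Rightarrow> real" and z :: "nat \<Rightarrow> 'z" and n a :: nat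
    and \<theta>S :: "real^'p" and \<theta>A :: "'z set \<Rightarrow> real^'p" and z' :: 'z
  assumes inj: "inj_on z {..<n}"
    and stationary: "(\<Sum>i<n. grad (L (z i)) \<theta>S) = 0"
    and subset_size_pos: "1 \<le> a" and subset_size_less: "a < n"
begin

abbreviation F :: "real^'p^'p" where "F \<equiv> fisher L z n \<theta>S"
abbreviation v :: "real^'p" where "v \<equiv> grad (logit_f L z') \<theta>S"
abbreviation X :: "'z set \<Rightarrow> real" where "X \<equiv> \<lambda>A. logit_f L z' (\<theta>A A)"

sublocale psd_symmetric F
  by (rule psd_symmetric_fisher)

sublocale uniform_subsets "z ` {..<n}" a
  using subset_size_pos subset_size_less card_image[OF inj] by unfold_locales auto

lemma n_pos: "real n > 0"
  using subset_size_less by simp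

lemma sum_sample: "(\<Sum>\<zeta>\<in>z ` {..<n}. h \<zeta>) = (\<Sum>i<n. h (z i))"
  by (simp add: sum.reindex[OF inj])

lemma tau_eq: "tau L z n \<theta>S \<mu> z' \<zeta> = - (v \<bullet> (R \<mu> *v grad (L \<zeta>) \<theta>S))"
  by (simp add: tau_def reg_inv_eq_resolvent)

lemma sum_tau_eq_0: "(\<Sum>\<zeta>\<in>z ` {..<n}. tau L z n \<theta>S \<mu> z' \<zeta>) = 0"
proof -
  have "(\<Sum>i<n. v \<bullet> (R \<mu> *v grad (L (z i)) \<theta>S)) = v \<bullet> (R \<mu> *v (\<Sum>i<n. grad (L (z i)) \<theta>S))"
    by (simp add: vec.sum inner_sum_right)
  then show ?thesis by (simp add: sum_sample tau_eq sum_negf stationary)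
qed

lemma unif_cov_tau:
  "unif_cov D X (\<lambda>A. \<Sum>\<zeta>\<in>A. tau L z n \<theta>S \<mu> z' \<zeta>) = a * r_val L z n a \<theta>S \<theta>A z' \<mu>"
proof -
  let ?\<alpha> = "alpha L z n a \<theta>A z'"
  have "(\<Sum>i<n. tau L z n \<theta>S \<mu> z' (z i) * ?\<alpha> i)
      = - (v \<bullet> (R \<mu> *v (\<Sum>i<n. ?\<alpha> i *\<^sub>R grad (L (z i)) \<theta>S)))"
    by (simp add: tau_eq vec.sum matrix_vector_mult_scaleR inner_sum_right sum_negf mult.commute)
  also have "(\<Sum>i<n. ?\<alpha> i *\<^sub>R grad (L (z i)) \<theta>S) = real n *\<^sub>R g_vec L z n a \<theta>S \<theta>A z'"
    using n_pos by (simp add: g_vec_def)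
  finally have "(\<Sum>i<n. tau L z n \<theta>S \<mu> z' (z i) * ?\<alpha> i) = real n * r_val L z n a \<theta>S \<theta>A z' \<mu>"
    by (simp add: r_val_def reg_inv_eq_resolvent matrix_vector_mult_scaleR)
  then show ?thesis
    using n_pos card_image[OF inj]
    by (simp add: unif_cov_additive sum_sample alpha_def)
qed

lemma t_val_2_eq:
  assumes "\<mu> > 0"
  shows "t_val 2 L z n \<theta>S z' \<mu> = (R \<mu> *v v) \<bullet> (F *v (R \<mu> *v v))"
  using quadratic_resolvent_sq[OF assms] resolvent_commute[OF assms]
  by (simp add: t_val_def reg_inv_eq_resolvent)

lemma unif_var_tau:
  assumes "\<mu> > 0"
  shows "unif_var D (\<lambda>A. \<Sum>\<zeta>\<in>A. tau L z n \<theta>S \<mu> z' \<zeta>)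
    = real a * (real n - real a) / (real n - 1) * t_val 2 L z n \<theta>S z' \<mu>"
proof -
  have "(tau L z n \<theta>S \<mu> z' \<zeta>)\<^sup>2 = (grad (L \<zeta>) \<theta>S \<bullet> (R \<mu> *v v)) * (grad (L \<zeta>) \<theta>S \<bullet> (R \<mu> *v v))" for \<zeta>
    by (metis tau_eq resolvent_symmetric[OF assms] inner_commute power2_minus power2_eq_square)
  then have "(\<Sum>i<n. (tau L z n \<theta>S \<mu> z' (z i))\<^sup>2) = real n * t_val 2 L z n \<theta>S z' \<mu>"
    using n_pos by (simp add: t_val_2_eq[OF assms] inner_fisher)
  then have "unif_var D (\<lambda>A. \<Sum>\<zeta>\<in>A. tau L z n \<theta>S \<mu> z' \<zeta>)
      = real a * (real n - real a) / (real n * (real n - 1)) * (real n * t_val 2 L z n \<theta>S z' \<mu>)"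
    using unif_var_additive[OF sum_tau_eq_0] by (simp add: card_image[OF inj] sum_sample)
  then show ?thesis
    using n_pos by simp
qed

lemma c_p_eq:
  assumes "\<mu> > 0"
  shows "c_p L z n a \<theta>S \<theta>A z' \<mu>
    = real a / (sqrt (unif_var D X) * sqrt (real a * (real n - real a) / (real n - 1)))
      * r_val L z n a \<theta>S \<theta>A z' \<mu> / sqrt (t_val 2 L z n \<theta>S z' \<mu>)"
  unfolding c_p_def pearson_def unif_cov_tau unif_var_tau[OF assms] real_sqrt_mult
  by (simp add: divide_inverse inverse_mult_distrib mult_ac)

lemma has_real_derivative_r_val:
  assumes "l > 0"
  shows "((\<lambda>\<mu>. r_val L z n a \<theta>S \<theta>A z' \<mu>) has_real_derivative
      v \<bullet> (mpow (reg_inv L z n \<theta>S l) 2 *v g_vec L z n a \<theta>S \<theta>A z')) (at l)"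
  using DERIV_minus[OF has_real_derivative_inner_resolvent[OF assms]]
  by (simp add: r_val_def reg_inv_eq_resolvent mpow_mult_vector)

lemma has_real_derivative_t_val_2:
  assumes "l > 0"
  shows "((\<lambda>\<mu>. t_val 2 L z n \<theta>S z' \<mu>) has_real_derivative - 2 * t_val 3 L z n \<theta>S z' l) (at l)"
  using has_real_derivative_quadratic_resolvent_sq[OF assms]
  by (simp add: t_val_def reg_inv_eq_resolvent)

lemma t_val_2_pos:
  assumes "\<mu> > 0" and "F *v v \<noteq> 0"
  shows "t_val 2 L z n \<theta>S z' \<mu> > 0"
  using quadratic_resolvent_sq_pos[OF assms] by (simp add: t_val_def reg_inv_eq_resolvent)

end

theorem mainTheorem2:
  fixes L :: "'z \<Rightarrow> real^'p \<Rightarrow> real"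
    and z :: "nat \<Rightarrow> 'z"
    and n a :: nat
    and \<theta>S :: "real^'p"
    and \<theta>A :: "'z set \<Rightarrow> real^'p"
    and z' :: 'z
    and lam :: real
  assumes n2: "n \<ge> 2"
    and inj: "inj_on z {..<n}"
    and Lpos: "\<And>\<zeta> \<theta>. L \<zeta> \<theta> > 0"
    and Ldiff: "\<And>\<zeta> \<theta>. L \<zeta> differentiable (at \<theta>)"
    and stat: "(\<Sum>i<n. grad (L (z i)) \<theta>S) = 0"
    and a1: "1 \<le> a" and an: "a < n"
    and lam_pos: "lam > 0"
    and Fgf: "fisher L z n \<theta>S *v grad (logit_f L z') \<theta>S \<noteq> 0"
    and varpos: "unif_var (size_subsets (z ` {..<n}) a) (\<lambda>A. logit_f L z' (\<theta>A A)) > 0"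
  shows "deriv (c_p L z n a \<theta>S \<theta>A z') lam > 0 \<longleftrightarrow>
         r_val L z n a \<theta>S \<theta>A z' lam * t_val 3 L z n \<theta>S z' lam
         > (- (grad (logit_f L z') \<theta>S \<bullet>
               (mpow (reg_inv L z n \<theta>S lam) 2 *v g_vec L z n a \<theta>S \<theta>A z')))
           * t_val 2 L z n \<theta>S z' lam"
proof -
  interpret training_setup L z n a \<theta>S \<theta>A z'
    using inj stat a1 an by unfold_locales
  define K where "K = real a / (sqrt (unif_var D X) * sqrt (real a * (real n - real a) / (real n - 1)))"
  have "K > 0"
    using varpos a1 an by (simp add: K_def)
  moreover have "\<forall>\<^sub>F \<mu> in nhds lam. c_p L z n a \<theta>S \<theta>A z' \<mu>
      = K * r_val L z n a \<theta>S \<theta>A z' \<mu> / sqrt (t_val 2 L z n \<theta>S z' \<mu>)"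
    using eventually_nhds_in_open[of "{0<..}" lam] lam_pos
    by (auto elim!: eventually_mono simp: c_p_eq K_def)
  ultimately have "deriv (c_p L z n a \<theta>S \<theta>A z') lam > 0 \<longleftrightarrow>
      r_val L z n a \<theta>S \<theta>A z' lam * (- 2 * t_val 3 L z n \<theta>S z' lam)
      < 2 * (v \<bullet> (mpow (reg_inv L z n \<theta>S lam) 2 *v g_vec L z n a \<theta>S \<theta>A z')) * t_val 2 L z n \<theta>S z' lam"
    by (intro deriv_ratio_sqrt_pos_iff t_val_2_pos lam_pos Fgf
        has_real_derivative_r_val has_real_derivative_t_val_2)
  then show ?thesis by (simp add: algebra_simps, arith)
qed

end
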